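(* Consider the linear mixture $\textsc{lin}$ with parameter space the unit simplex $\mathcal{S}=\{\mathbf{w}\in\mathbb{R}^m:\mathbf{w}\ge0,\ \sum_iw_i=1\}$. Then for every probability matrix $\mathbf{P}$ over $\mathcal{P}_+$ and every $x\in\mathcal{X}$, the function $\mathbf{w}\mapsto\ell(x,\textsc{lin}(\mathbf{w},\mathbf{P}))$ is convex and differentiable on $\mathcal{S}$, and for all $\mathbf{w}\in\mathcal{S}$ $$\lvert\nabla_{\mathbf{w}}\ell(x,\textsc{lin}(\mathbf{w},\mathbf{P}))\rvert^2\le a\,\ell(x,\textsc{lin}(\mathbf{w},\mathbf{P}))$$ for every $a\ge m\log_2^2(e)\,\frac{p_{\max}(\mathbf{P})^2}{p_{\min}(\mathbf{P})^2\log_2(1/p_{\min}(\mathbf{P}))}$. In particular $\textsc{lin}$ satisfies the properties of a nice mixture, with the constant in the gradient condition given by this bound.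
   Context: $\mathcal{X}=\{1,\dots,N\}$, $1<N<\infty$; $\mathcal{P}_+$ is the set of distributions on $\mathcal{X}$ with positive probability on each letter; $m>1$. A probability matrix over $\mathcal{P}_+$ is $\mathbf{P}=(\mathbf{p}(1)\cdots\mathbf{p}(N))$ with $\mathbf{p}(x)=(p_1(x),\dots,p_m(x))^{\mathsf T}$, $p_i\in\mathcal{P}_+$. $p_{\max}(\mathbf{P}):=\max_{x}\max_{i}p_i(x)$, $p_{\min}(\mathbf{P}):=\min_{x}\min_{i}p_i(x)$. $\ell(x,p):=-\log_2p(x)$. The linear mixture is $\textsc{lin}(x;\mathbf{w},\mathbf{P}):=\mathbf{w}^{\mathsf T}\mathbf{p}(x)$ for $\mathbf{w}\in\mathcal{S}$. A mixture with parameter space $\mathcal{W}$ is nice if $\mathcal{W}$ is non-empty, compact, convex, $\mathbf{w}\mapsto\ell(x,\textsc{mix}(\mathbf{w},\mathbf{P}))$ is convex and differentiable on $\mathcal{W}$ for all $\mathbf{P},x$, and there is $a>0$ with $\lvert\nabla_{\mathbf{w}}\ell(x,\textsc{mix}(\mathbf{w},\mathbf{P}))\rvert^2\le a\,\ell(x,\textsc{mix}(\mathbf{w},\mathbf{P}))$ for all $\mathbf{w},\mathbf{P},x$. *)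

theory Defs
  imports "HOL-Analysis.Analysis"
begin

text \<open>Alphabet: a finite type 'x (N = CARD('x)); experts indexed by the finite type 'm
  (m = CARD('m)). A probability matrix P assigns to each letter x the column
  vector p(x) = (p_1(x),...,p_m(x)).\<close>

definition prob_matrix :: "('x::finite \<Rightarrow> real^'m::finite) \<Rightarrow> bool" where
  "prob_matrix P \<longleftrightarrow> (\<forall>x i. P x $ i > 0) \<and> (\<forall>i. (\<Sum>x\<in>UNIV. P x $ i) = 1)"

definition unit_simplex :: "(real^'m::finite) set" where
  "unit_simplex = {w. (\<forall>i. w $ i \<ge> 0) \<and> (\<Sum>i\<in>UNIV. w $ i) = 1}"

definition p_max :: "('x::finite \<Rightarrow> real^'m::finite) \<Rightarrow> real" where
  "p_max P = Max {P x $ i | x i. True}"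

definition p_min :: "('x::finite \<Rightarrow> real^'m::finite) \<Rightarrow> real" where
  "p_min P = Min {P x $ i | x i. True}"

definition code_loss :: "real \<Rightarrow> real" where
  "code_loss q = - log 2 q"

definition lin :: "'x \<Rightarrow> real^'m::finite \<Rightarrow> ('x \<Rightarrow> real^'m) \<Rightarrow> real" where
  "lin x w P = w \<bullet> P x"

end

theory Submission
  imports Defs
begin

text \<open>The loss \<open>w \<mapsto> -log\<^sub>2 (w \<bullet> p)\<close> is convex with gradient \<open>-p / (s ln 2)\<close>, where
  \<open>s = w \<bullet> p\<close>, so its squared gradient norm is at most \<open>m pmax\<^sup>2 / (s ln 2)\<^sup>2\<close>.
  Since each column of the probability matrix sums to 1 over at least two letters, every
  entry, and hence \<open>s\<close>, lies in \<open>[t, 1 - t]\<close> with \<open>t = pmin\<close>. The function \<open>s\<^sup>2 (-ln s)\<close>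
  increases up to \<open>e\<^sup>-\<^sup>1\<^sup>/\<^sup>2\<close>, decreases afterwards, and its value at \<open>t \<le> 1/2\<close> does not exceed
  its value at \<open>1 - t\<close>; so on \<open>[t, 1 - t]\<close> it is minimal at \<open>t\<close>. The resulting inequality
  \<open>1/s\<^sup>2 \<le> (-ln s) / (t\<^sup>2 (-ln t))\<close> turns the gradient bound into a multiple of the loss.\<close>

lemma unit_simplex_nonempty: "(unit_simplex :: (real^'m::finite) set) \<noteq> {}"
proof -
  have "((\<chi> i. 1 / real CARD('m)) :: real^'m) \<in> unit_simplex"
    by (simp add: unit_simplex_def)
  then show ?thesis by blast
qed

lemma closed_unit_simplex: "closed (unit_simplex :: (real^'m::finite) set)"
proof -
  have "unit_simplex = (\<Inter>i. {w::real^'m. 0 \<le> w $ i}) \<inter> {w. (\<Sum>i\<in>UNIV. w $ i) = 1}"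
    unfolding unit_simplex_def by blast
  moreover have "closed {w::real^'m. 0 \<le> w $ i}" for i
    by (intro closed_Collect_le continuous_intros)
  moreover have "closed {w::real^'m. (\<Sum>i\<in>UNIV. w $ i) = 1}"
    by (intro closed_Collect_eq continuous_intros)
  ultimately show ?thesis by (metis closed_INT closed_Int)
qed

lemma bounded_unit_simplex: "bounded (unit_simplex :: (real^'m::finite) set)"
  unfolding bounded_iff
proof (intro exI ballI)
  fix w :: "real^'m" assume "w \<in> unit_simplex"
  then show "norm w \<le> 1"
    using norm_le_l1_cart[of w] by (simp add: unit_simplex_def)
qed

lemma compact_unit_simplex: "compact (unit_simplex :: (real^'m::finite) set)"
  using closed_unit_simplex bounded_unit_simplex by (auto simp: compact_eq_bounded_closed)

lemma convex_unit_simplex: "convex (unit_simplex :: (real^'m::finite) set)"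
  unfolding convex_def unit_simplex_def
  by (simp add: sum.distrib sum_distrib_left[symmetric])

lemma inner_unit_simplex_between:
  fixes w p :: "real^'m::finite"
  assumes w: "w \<in> unit_simplex" and bounds: "\<And>i. lo \<le> p $ i" "\<And>i. p $ i \<le> hi"
  shows "lo \<le> w \<bullet> p" "w \<bullet> p \<le> hi"
proof -
  have w0: "0 \<le> w $ i" for i using w by (simp add: unit_simplex_def)
  have w1: "(\<Sum>i\<in>UNIV. w $ i) = 1" using w by (simp add: unit_simplex_def)
  have "lo = (\<Sum>i\<in>UNIV. w $ i * lo)" using w1 by (simp add: sum_distrib_right[symmetric])
  also have "\<dots> \<le> (\<Sum>i\<in>UNIV. w $ i * p $ i)"
    by (intro sum_mono mult_left_mono bounds w0)
  finally show "lo \<le> w \<bullet> p" by (simp add: inner_vec_def)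
  have "(\<Sum>i\<in>UNIV. w $ i * p $ i) \<le> (\<Sum>i\<in>UNIV. w $ i * hi)"
    by (intro sum_mono mult_left_mono bounds w0)
  also have "\<dots> = hi" using w1 by (simp add: sum_distrib_right[symmetric])
  finally show "w \<bullet> p \<le> hi" by (simp add: inner_vec_def)
qed

definition sq_neg_ln :: "real \<Rightarrow> real" where
  "sq_neg_ln s = s\<^sup>2 * - ln s"

lemma has_real_derivative_sq_neg_ln:
  "s > 0 \<Longrightarrow> (sq_neg_ln has_real_derivative (s * (-2 * ln s - 1))) (at s)"
  unfolding sq_neg_ln_def
  by (auto intro!: derivative_eq_intros simp: algebra_simps power2_eq_square)

lemma sq_neg_ln_mono:
  assumes "0 < a" "a \<le> b" "b \<le> exp (-1/2)"
  shows "sq_neg_ln a \<le> sq_neg_ln b"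
proof (rule DERIV_nonneg_imp_nondecreasing[OF assms(2)])
  fix x assume x: "a \<le> x" "x \<le> b"
  then have "x > 0" "ln x \<le> -1/2"
    using assms ln_le_cancel_iff[of x "exp (-1/2)"] by auto
  then show "\<exists>y. DERIV sq_neg_ln x :> y \<and> 0 \<le> y"
    using has_real_derivative_sq_neg_ln by force
qed

lemma sq_neg_ln_antimono:
  assumes "exp (-1/2) \<le> a" "a \<le> b"
  shows "sq_neg_ln b \<le> sq_neg_ln a"
proof -
  have "- sq_neg_ln a \<le> - sq_neg_ln b"
  proof (rule DERIV_nonneg_imp_nondecreasing[OF assms(2)])
    fix x assume x: "a \<le> x" "x \<le> b"
    have "0 < exp (-1/2::real)" by simp
    then have "x > 0" using x assms by linarith
    then have "-1/2 \<le> ln x"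
      using x assms ln_le_cancel_iff[of "exp (-1/2)" x] by simp
    then have "x * (-2 * ln x - 1) \<le> 0"
      using \<open>x > 0\<close> by (intro mult_nonneg_nonpos) auto
    then have "0 \<le> - (x * (-2 * ln x - 1))" by simp
    then show "\<exists>y. DERIV (\<lambda>x. - sq_neg_ln x) x :> y \<and> 0 \<le> y"
      using DERIV_minus[OF has_real_derivative_sq_neg_ln[OF \<open>x > 0\<close>]] by blast
  qed
  then show ?thesis by simp
qed

lemma exp_neg_half_ge_half: "1/2 \<le> exp (-1/2::real)"
  using exp_ge_add_one_self[of "-1/2::real"] by simp

lemma neg_mult_ln_le_exp_neg_one:
  assumes "(s::real) > 0"
  shows "- (s * ln s) \<le> exp (-1)"
proof -
  have "ln (1 / (s * exp 1)) \<le> 1 / (s * exp 1) - 1"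
    using assms by (intro ln_le_minus_one) auto
  then have "- ln s \<le> 1 / (s * exp 1)" using assms by (simp add: ln_div ln_mult)
  then have "s * - ln s \<le> s * (1 / (s * exp 1))" using assms by (intro mult_left_mono) auto
  then show ?thesis using assms by (simp add: exp_minus field_simps)
qed

lemma sq_neg_ln_le_reflect:
  assumes "0 < t" "t \<le> 1/2"
  shows "sq_neg_ln t \<le> sq_neg_ln (1 - t)"
proof (cases "t \<le> 1 - exp (-1/2)")
  case True
  txt \<open>Here \<open>(1 - t)\<^sup>2 \<ge> e\<^sup>-\<^sup>1\<close>, and \<open>e\<^sup>-\<^sup>1\<close> bounds \<open>-t ln t\<close> while \<open>t\<close> bounds \<open>-ln (1 - t)\<close>.\<close>
  have "exp (-1) = (exp (-1/2::real))\<^sup>2" by (simp add: power2_eq_square exp_add[symmetric])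
  also have "\<dots> \<le> (1 - t)\<^sup>2" using True by (intro power_mono) auto
  finally have e: "exp (-1) \<le> (1 - t)\<^sup>2" .
  have "ln (1 - t) \<le> (1 - t) - 1" using assms by (intro ln_le_minus_one) auto
  then have l: "t \<le> - ln (1 - t)" by simp
  have "sq_neg_ln t = t * - (t * ln t)" by (simp add: sq_neg_ln_def power2_eq_square)
  also have "\<dots> \<le> t * exp (-1)"
    using neg_mult_ln_le_exp_neg_one[OF assms(1)] assms by (intro mult_left_mono) auto
  also have "\<dots> \<le> (1 - t)\<^sup>2 * t" using e assms by (simp add: mult.commute mult_left_mono)
  also have "\<dots> \<le> sq_neg_ln (1 - t)"
    unfolding sq_neg_ln_def using l by (intro mult_left_mono) auto
  finally show ?thesis .
next
  case False
  then show ?thesis using assms by (intro sq_neg_ln_mono) auto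
qed

lemma sq_neg_ln_min_at_left_end:
  assumes "0 < t" "t \<le> s" "s \<le> 1 - t"
  shows "sq_neg_ln t \<le> sq_neg_ln s"
proof (cases "s \<le> exp (-1/2)")
  case True
  then show ?thesis using assms by (intro sq_neg_ln_mono) auto
next
  case False
  then have "sq_neg_ln t \<le> sq_neg_ln (1 - t)"
    using assms exp_neg_half_ge_half by (intro sq_neg_ln_le_reflect) auto
  also have "\<dots> \<le> sq_neg_ln s" using False assms by (intro sq_neg_ln_antimono) auto
  finally show ?thesis .
qed

lemma convex_on_code_loss_inner:
  fixes p :: "real^'m::finite"
  assumes "convex S" and pos: "\<And>w. w \<in> S \<Longrightarrow> 0 < w \<bullet> p"
  shows "convex_on S (\<lambda>w. code_loss (w \<bullet> p))"
proof (rule convex_onI)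
  show "convex S" by fact
  fix \<theta> :: real and u v :: "real^'m"
  assume \<theta>: "0 < \<theta>" "\<theta> < 1" and "u \<in> S" "v \<in> S"
  then have "u \<bullet> p \<in> {0<..}" "v \<bullet> p \<in> {0<..}" using pos by auto
  from convex_onD[OF minus_log_convex[of 2] _ _ this] \<theta>
  show "code_loss (((1 - \<theta>) *\<^sub>R u + \<theta> *\<^sub>R v) \<bullet> p)
        \<le> (1 - \<theta>) * code_loss (u \<bullet> p) + \<theta> * code_loss (v \<bullet> p)"
    by (simp add: code_loss_def inner_add_left)
qed

lemma has_derivative_code_loss_inner:
  fixes p w :: "real^'m::finite"
  assumes "0 < w \<bullet> p"
  shows "((\<lambda>v. code_loss (v \<bullet> p)) has_derivative
           (\<lambda>h. ((-1 / (ln 2 * (w \<bullet> p))) *\<^sub>R p) \<bullet> h)) (at w)"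
proof -
  have "((\<lambda>v. ln (v \<bullet> p)) has_derivative (\<lambda>h. (h \<bullet> p) * inverse (w \<bullet> p))) (at w)"
    using DERIV_compose_FDERIV[OF DERIV_ln[OF assms]
        has_derivative_inner_left[OF has_derivative_ident]] by simp
  from has_derivative_mult_right[OF this, of "-1 / ln 2"]
  have "((\<lambda>v. -1 / ln 2 * ln (v \<bullet> p)) has_derivative
          (\<lambda>h. -1 / ln 2 * ((h \<bullet> p) * inverse (w \<bullet> p)))) (at w)" .
  moreover have "(\<lambda>v. code_loss (v \<bullet> p)) = (\<lambda>v. -1 / ln 2 * ln (v \<bullet> p))"
    by (simp add: fun_eq_iff code_loss_def log_def)
  moreover have "(\<lambda>h. ((-1 / (ln 2 * (w \<bullet> p))) *\<^sub>R p) \<bullet> h)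
      = (\<lambda>h. -1 / ln 2 * ((h \<bullet> p) * inverse (w \<bullet> p)))"
    by (simp add: fun_eq_iff inner_commute[of p] divide_inverse)
  ultimately show ?thesis by simp
qed

lemma norm_power2_le_card:
  fixes p :: "real^'m::finite"
  assumes "\<And>i. \<bar>p $ i\<bar> \<le> c"
  shows "(norm p)\<^sup>2 \<le> real CARD('m) * c\<^sup>2"
proof -
  have "(norm p)\<^sup>2 = (\<Sum>i\<in>UNIV. \<bar>p $ i\<bar>\<^sup>2)"
    unfolding power2_norm_eq_inner inner_vec_def by (simp add: power2_eq_square)
  also have "\<dots> \<le> (\<Sum>i\<in>(UNIV::'m set). c\<^sup>2)"
    using assms by (intro sum_mono power_mono) auto
  finally show ?thesis by simp
qed

lemma norm_gradient_code_loss_le: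
  fixes p w :: "real^'m::finite"
  assumes t: "0 < t" "t \<le> w \<bullet> p" "w \<bullet> p \<le> 1 - t" and c: "\<And>i. \<bar>p $ i\<bar> \<le> c"
  shows "(norm ((-1 / (ln 2 * (w \<bullet> p))) *\<^sub>R p))\<^sup>2
         \<le> real CARD('m) * c\<^sup>2 / (ln 2 * (t\<^sup>2 * - ln t)) * code_loss (w \<bullet> p)"
proof -
  define s where "s = w \<bullet> p"
  define K where "K = real CARD('m) * c\<^sup>2"
  have s: "0 < s" "s < 1" and "t < 1" using t by (auto simp: s_def)
  then have "ln t < 0" using t by simp
  then have "0 < t\<^sup>2 * - ln t" using t by (intro mult_pos_pos) auto
  moreover have "t\<^sup>2 * - ln t \<le> s\<^sup>2 * - ln s"
    using sq_neg_ln_min_at_left_end[OF t[folded s_def]] by (simp add: sq_neg_ln_def)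
  ultimately have key: "1 / s\<^sup>2 \<le> - ln s / (t\<^sup>2 * - ln t)"
    using s by (simp add: field_simps)
  have "(norm ((-1 / (ln 2 * s)) *\<^sub>R p))\<^sup>2 = (norm p)\<^sup>2 / ln 2 ^ 2 * (1 / s\<^sup>2)"
    by (simp add: power_mult_distrib power_divide)
  also have "\<dots> \<le> K / ln 2 ^ 2 * (- ln s / (t\<^sup>2 * - ln t))"
    using norm_power2_le_card[OF c] key s
    by (intro mult_mono divide_right_mono) (auto simp: K_def)
  also have "\<dots> = K / (ln 2 * (t\<^sup>2 * - ln t)) * code_loss s"
    by (simp add: code_loss_def log_def power2_eq_square)
  finally show ?thesis by (simp add: s_def K_def)
qed

lemma prob_matrix_entry_bounds:
  fixes P :: "'x::finite \<Rightarrow> real^'m::finite"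
  assumes N: "CARD('x) > 1" and P: "prob_matrix P"
  shows "0 < p_min P" "p_min P \<le> P x $ i" "P x $ i \<le> 1 - p_min P" "P x $ i \<le> p_max P"
proof -
  have entries: "{P x $ i | x i. True} = (\<lambda>(x, i). P x $ i) ` UNIV" by auto
  have fin: "finite {P x $ i | x i. True}" unfolding entries by simp
  have pos: "0 < P y $ j" for y j using P by (simp add: prob_matrix_def)
  have min_le: "p_min P \<le> P y $ j" for y j
    unfolding p_min_def by (rule Min_le[OF fin]) auto
  have "p_min P \<in> {P x $ i | x i. True}" unfolding p_min_def by (rule Min_in[OF fin]) auto
  then show "0 < p_min P" using pos by auto
  show "p_min P \<le> P x $ i" by (rule min_le)
  show "P x $ i \<le> p_max P" unfolding p_max_def by (rule Max_ge[OF fin]) auto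
  obtain x' :: 'x where "x' \<noteq> x"
  proof -
    have "UNIV \<noteq> {x}"
    proof
      assume "UNIV = {x}"
      then have "CARD('x) = card {x}" by (simp only:)
      with N show False by simp
    qed
    then show ?thesis using that by blast
  qed
  then have "P x $ i + P x' $ i = (\<Sum>y\<in>{x, x'}. P y $ i)" by simp
  also have "\<dots> \<le> (\<Sum>y\<in>UNIV. P y $ i)" by (rule sum_mono2) (auto intro: less_imp_le[OF pos])
  also have "\<dots> = 1" using P by (simp add: prob_matrix_def)
  finally show "P x $ i \<le> 1 - p_min P" using min_le[of x' i] by simp
qed

theorem lemma2:
  fixes P :: "'x::finite \<Rightarrow> real^'m::finite" and x :: 'x and a :: real
  assumes N: "CARD('x) > 1" and M: "CARD('m) > 1"
    and P: "prob_matrix P"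
    and a: "a \<ge> real CARD('m) * (log 2 (exp 1))\<^sup>2 * (p_max P)\<^sup>2
               / ((p_min P)\<^sup>2 * log 2 (1 / p_min P))"
  shows "unit_simplex \<noteq> {} \<and> compact (unit_simplex :: (real^'m) set)
         \<and> convex (unit_simplex :: (real^'m) set)
         \<and> convex_on unit_simplex (\<lambda>w. code_loss (lin x w P))
         \<and> (\<forall>w\<in>unit_simplex. (\<lambda>v. code_loss (lin x v P)) differentiable (at w))
         \<and> (\<forall>w\<in>unit_simplex. \<exists>g. ((\<lambda>v. code_loss (lin x v P)) has_derivative (\<lambda>h. g \<bullet> h)) (at w)
                \<and> (norm g)\<^sup>2 \<le> a * code_loss (lin x w P))"
proof -
  define t where "t = p_min P"
  have t_pos: "0 < t" using prob_matrix_entry_bounds(1)[OF N P] by (simp add: t_def)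
  note bounds = prob_matrix_entry_bounds(2-4)[OF N P, of x, folded t_def]
  have s: "t \<le> w \<bullet> P x" "w \<bullet> P x \<le> 1 - t" if "w \<in> unit_simplex" for w
    using inner_unit_simplex_between[OF that bounds(1) bounds(2)] by auto
  have loss_nonneg: "0 \<le> code_loss (w \<bullet> P x)" if "w \<in> unit_simplex" for w
    using s[OF that] t_pos by (simp add: code_loss_def)
  have a': "real CARD('m) * (p_max P)\<^sup>2 / (ln 2 * (t\<^sup>2 * - ln t)) \<le> a"
    using a t_pos by (simp add: t_def log_def ln_div field_simps power2_eq_square)
  have entry_abs: "\<bar>P x $ i\<bar> \<le> p_max P" for i
    using t_pos bounds(1,3)[of i] by simp
  have gradient: "\<exists>g. ((\<lambda>v. code_loss (lin x v P)) has_derivative (\<lambda>h. g \<bullet> h)) (at w)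
                    \<and> (norm g)\<^sup>2 \<le> a * code_loss (lin x w P)" if w: "w \<in> unit_simplex" for w
  proof (intro exI conjI)
    define g where "g = (-1 / (ln 2 * (w \<bullet> P x))) *\<^sub>R P x"
    show "((\<lambda>v. code_loss (lin x v P)) has_derivative (\<lambda>h. g \<bullet> h)) (at w)"
      using has_derivative_code_loss_inner[of w "P x"] s[OF w] t_pos
      by (simp add: lin_def g_def)
    have "(norm g)\<^sup>2
        \<le> real CARD('m) * (p_max P)\<^sup>2 / (ln 2 * (t\<^sup>2 * - ln t)) * code_loss (w \<bullet> P x)"
      unfolding g_def by (rule norm_gradient_code_loss_le[OF t_pos s[OF w] entry_abs])
    also have "\<dots> \<le> a * code_loss (w \<bullet> P x)"
      by (rule mult_right_mono[OF a' loss_nonneg[OF w]])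
    finally show "(norm g)\<^sup>2 \<le> a * code_loss (lin x w P)" by (simp add: lin_def)
  qed
  have "convex_on unit_simplex (\<lambda>w. code_loss (lin x w P))"
    using convex_on_code_loss_inner[OF convex_unit_simplex, of "P x"] s t_pos
    by (force simp: lin_def)
  then show ?thesis
    using unit_simplex_nonempty compact_unit_simplex convex_unit_simplex gradient
    by (auto intro: differentiableI)
qed

end
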